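(* Let $p$ be a prime and let $\mathcal{F}$ be a linear, affine-invariant family of functions $\mathbb{F}_p^n\to\mathbb{F}_p$. Suppose $x^e\in\mathcal{F}$ for some $e\in\{0,\dots,p-1\}^n$. Then $x^{e'}\in\mathcal{F}$ for every $e'\in\{0,\dots,p-1\}^n$ with $|e'|_1\leq|e|_1$.
   Context: For $e\in\{0,\dots,p-1\}^n$, $x^e$ denotes the function $x\mapsto\prod_{i=1}^n x_i^{e_i}$ on $\mathbb{F}_p^n$ (with $0^0=1$), and $|e|_1=\sum_i e_i$. A family $\mathcal{F}$ of functions $\mathbb{F}_p^n\to\mathbb{F}_p$ is linear if it contains the zero function and is closed under $\mathbb{F}_p$-linear combinations; it is affine-invariant if $f\circ T\in\mathcal{F}$ whenever $f\in\mathcal{F}$ and $T:\mathbb{F}_p^n\to\mathbb{F}_p^n$ is an affine transformation. *)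

theory Defs
  imports "Berlekamp_Zassenhaus.Finite_Field"
begin

text \<open>Points of F_p^n are functions 'n => 'p mod_ring, with 'n a finite index type
  (n = CARD('n)) and 'p a type of prime cardinality p.\<close>

definition monomial_fun :: "('n::finite \<Rightarrow> nat) \<Rightarrow> ('n \<Rightarrow> 'p::prime_card mod_ring) \<Rightarrow> 'p mod_ring" where
  "monomial_fun e = (\<lambda>x. \<Prod>i\<in>UNIV. x i ^ e i)"

definition deg1 :: "('n::finite \<Rightarrow> nat) \<Rightarrow> nat" where
  "deg1 e = (\<Sum>i\<in>UNIV. e i)"

definition linear_family :: "(('n::finite \<Rightarrow> 'p::prime_card mod_ring) \<Rightarrow> 'p mod_ring) set \<Rightarrow> bool" where
  "linear_family F \<longleftrightarrow> (\<lambda>x. 0) \<in> F \<and>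
     (\<forall>f\<in>F. \<forall>g\<in>F. \<forall>a b. (\<lambda>x. a * f x + b * g x) \<in> F)"

definition affine_map :: "(('n::finite \<Rightarrow> 'p::prime_card mod_ring) \<Rightarrow> ('n \<Rightarrow> 'p mod_ring)) \<Rightarrow> bool" where
  "affine_map T \<longleftrightarrow> (\<exists>A b. \<forall>x. T x = (\<lambda>i. (\<Sum>j\<in>UNIV. A i j * x j) + b i))"

definition affine_invariant :: "(('n::finite \<Rightarrow> 'p::prime_card mod_ring) \<Rightarrow> 'p mod_ring) set \<Rightarrow> bool" where
  "affine_invariant F \<longleftrightarrow> (\<forall>f\<in>F. \<forall>T. affine_map T \<longrightarrow> f \<circ> T \<in> F)"

end

theory Submission
  imports Defs "Berlekamp_Zassenhaus.Berlekamp_Type_Based"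
begin

(* The substitutions x_i -> x_i + 1 and x_i -> x_i + x_j turn x^e into
   sum_l C(e_i, l) x_i^l y^(e_i - l) prod_(k ~= i) x_k^(e_k)  (with y = 1 or y = x_j), and the
   binomial coefficients are units of F_p because e_i < p. Each summand can be isolated inside
   the family: averaging f(x_i -> t x_i) against the weight t^(p - 1 - l) over t in F_p keeps
   exactly the part of degree l in x_i, because sum_t t^m is -1 when m is a positive multiple
   of p - 1 and 0 otherwise. So the family contains x^e' whenever e' arises from e by lowering
   one exponent or by moving one unit of exponent to another coordinate, and such moves reach
   every e' with |e'|_1 <= |e|_1. *)

lemma linear_family_scale:
  assumes "linear_family F" "f \<in> F"
  shows "(\<lambda>x. c * f x) \<in> F"
proof -
  have "(\<lambda>x. c * f x + 0 * f x) \<in> F"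
    using assms unfolding linear_family_def by blast
  then show ?thesis by simp
qed

lemma linear_family_add:
  assumes "linear_family F" "f \<in> F" "g \<in> F"
  shows "(\<lambda>x. f x + g x) \<in> F"
proof -
  have "(\<lambda>x. 1 * f x + 1 * g x) \<in> F"
    using assms unfolding linear_family_def by blast
  then show ?thesis by simp
qed

lemma linear_family_sum:
  assumes "linear_family F" "finite A" "\<And>a. a \<in> A \<Longrightarrow> g a \<in> F"
  shows "(\<lambda>x. \<Sum>a\<in>A. g a x) \<in> F"
  using assms(2,3)
proof (induction A rule: finite_induct)
  case empty
  then show ?case using assms(1) unfolding linear_family_def by simp
next
  case (insert a A)
  then show ?case using linear_family_add[OF assms(1), of "g a"] by simp
qed

lemma affine_map_fun_upd:
  fixes i :: "'n::finite" and a :: "'n \<Rightarrow> 'p::prime_card mod_ring"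
  shows "affine_map (\<lambda>x. x(i := (\<Sum>j\<in>UNIV. a j * x j) + b))"
  unfolding affine_map_def
proof (intro exI allI ext)
  fix x :: "'n \<Rightarrow> 'p mod_ring" and k
  show "(x(i := (\<Sum>j\<in>UNIV. a j * x j) + b)) k =
    (\<Sum>j\<in>UNIV. (if k = i then a j else of_bool (j = k)) * x j) + (if k = i then b else 0)"
    by (cases "k = i") simp_all
qed

lemma affine_invariant_fun_upd:
  assumes "affine_invariant F" "f \<in> F"
  shows "(\<lambda>x. f (x(i := (\<Sum>j\<in>UNIV. a j * x j) + b))) \<in> F"
  using assms affine_map_fun_upd unfolding affine_invariant_def comp_def by blast

lemma affine_invariant_scale_coord:
  assumes "affine_invariant F" "f \<in> F"
  shows "(\<lambda>x. f (x(i := c * x i))) \<in> F"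
  using affine_invariant_fun_upd[OF assms, of i "\<lambda>j. of_bool (j = i) * c" 0]
  by (simp add: mult.assoc)

lemma affine_invariant_shift_coord:
  assumes "affine_invariant F" "f \<in> F"
  shows "(\<lambda>x. f (x(i := x i + c))) \<in> F"
  using affine_invariant_fun_upd[OF assms, of i "\<lambda>j. of_bool (j = i)" c]
  by simp

lemma affine_invariant_add_coord:
  assumes "affine_invariant F" "f \<in> F" "j \<noteq> i"
  shows "(\<lambda>x. f (x(i := x i + x j))) \<in> F"
  using affine_invariant_fun_upd[OF assms(1,2), of i "\<lambda>k. of_bool (k = i) + of_bool (k = j)" 0]
  by (simp add: distrib_right sum.distrib)

lemma power_card_minus_one_mod_ring:
  assumes "(t::'p::prime_card mod_ring) \<noteq> 0"
  shows "t ^ (CARD('p) - 1) = 1"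
proof -
  have "CARD('p) = Suc (CARD('p) - 1)"
    using nontriv[where 'a='p] by simp
  then have "t ^ (CARD('p) - 1) * t = 1 * t"
    using fermat_theorem_mod_ring[of t] by (metis mult.commute mult_1 power_Suc)
  then show ?thesis using assms by simp
qed

lemma power_sum_mod_ring_less:
  assumes "m < CARD('p) - 1"
  shows "(\<Sum>t\<in>UNIV. (t::'p::prime_card mod_ring) ^ m) = 0"
proof (cases "m = 0")
  case True
  then show ?thesis by simp
next
  case False
  define q :: "'p mod_ring poly" where "q = monom 1 m - 1"
  have "q \<noteq> 0" "degree q \<le> m"
    using False
    by (auto simp: q_def degree_diff_le degree_monom_le dest: arg_cong[of _ _ "\<lambda>q. coeff q m"])
  then have "card {t. poly q t = 0} \<le> m"
    using card_poly_roots_bound[of q] by linarith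
  then have "card {t::'p mod_ring. t ^ m = 1} \<le> m"
    by (simp add: q_def poly_monom)
  then have "card {t::'p mod_ring. t ^ m = 1} < card (UNIV - {0::'p mod_ring})"
    using assms by (simp add: card_Diff_singleton)
  then have "\<not> UNIV - {0} \<subseteq> {t::'p mod_ring. t ^ m = 1}"
    by (meson card_mono finite_class.finite_UNIV finite_subset not_le subset_UNIV)
  then obtain c :: "'p mod_ring" where c: "c \<noteq> 0" "c ^ m \<noteq> 1" by auto
  have "(\<Sum>t\<in>UNIV. t ^ m) = (\<Sum>t\<in>UNIV. (c * t) ^ m)"
    by (rule sum.reindex_bij_witness[of _ "\<lambda>t. c * t" "\<lambda>t. inverse c * t"])
      (use c in \<open>auto simp: mult.assoc[symmetric]\<close>)
  also have "\<dots> = c ^ m * (\<Sum>t\<in>UNIV. t ^ m)"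
    by (simp add: power_mult_distrib sum_distrib_left)
  finally have "(1 - c ^ m) * (\<Sum>t\<in>UNIV. t ^ m) = 0"
    by (simp add: algebra_simps)
  then show ?thesis using c by simp
qed

lemma power_sum_mod_ring_card_minus_one:
  "(\<Sum>t\<in>UNIV. (t::'p::prime_card mod_ring) ^ (CARD('p) - 1)) = -1"
proof -
  have "CARD('p) - 1 \<noteq> 0"
    using nontriv[where 'a='p] by simp
  then have "t ^ (CARD('p) - 1) = of_bool (t \<noteq> 0)" for t :: "'p mod_ring"
    using power_card_minus_one_mod_ring[of t] by auto
  then have "(\<Sum>t\<in>UNIV. (t::'p mod_ring) ^ (CARD('p) - 1)) = (\<Sum>t\<in>UNIV. of_bool (t \<noteq> (0::'p mod_ring)))"
    by simp
  also have "\<dots> = of_nat (card (UNIV - {0::'p mod_ring}))"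
    by (simp add: set_diff_eq)
  also have "\<dots> = of_nat (CARD('p) - 1)"
    by (simp add: card_Diff_singleton)
  also have "\<dots> = -1"
    using nontriv[where 'a='p] by (simp add: of_nat_diff)
  finally show ?thesis .
qed

lemma power_sum_mod_ring:
  "(\<Sum>t\<in>UNIV. (t::'p::prime_card mod_ring) ^ m) =
    (if 0 < m \<and> (CARD('p) - 1) dvd m then -1 else 0)"
proof (induction m rule: less_induct)
  case (less m)
  consider "m < CARD('p) - 1" | "m = CARD('p) - 1" | "CARD('p) - 1 < m" by linarith
  then show ?case
  proof cases
    case 1
    then show ?thesis by (auto simp: power_sum_mod_ring_less dest: dvd_imp_le)
  next
    case 2
    then show ?thesis
      using nontriv[where 'a='p] power_sum_mod_ring_card_minus_one by simp
  next
    case 3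
    define k where "k = m - (CARD('p) - 1)"
    have "t ^ m = t ^ k" for t :: "'p mod_ring"
    proof -
      have "m = (k - 1) + CARD('p)" "k = Suc (k - 1)"
        using 3 by (auto simp: k_def)
      then show ?thesis by (metis fermat_theorem_mod_ring power_Suc power_add mult.commute)
    qed
    moreover have "0 < k" "k < m"
      using 3 nontriv[where 'a='p] by (auto simp: k_def)
    moreover have "(CARD('p) - 1) dvd m \<longleftrightarrow> (CARD('p) - 1) dvd k"
      using 3 dvd_minus_self[of "CARD('p) - 1" m] unfolding k_def by linarith
    ultimately show ?thesis using less[of k] by simp
  qed
qed

lemma dvd_between_imp_eq:
  fixes q m :: nat
  assumes "q dvd m" "0 < m" "m < 2 * q"
  shows "m = q"
proof (rule ccontr)
  assume "m \<noteq> q"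
  then consider "m < q" | "q < m" by linarith
  then show False
  proof cases
    case 1
    then show False using assms nat_dvd_not_less by blast
  next
    case 2
    then have "q dvd m - q" using assms(1) by (simp add: dvd_diff_nat)
    then show False using 2 assms(3) nat_dvd_not_less[of "m - q" q] by linarith
  qed
qed

lemma coefficient_in_family:
  fixes F :: "(('n::finite \<Rightarrow> 'p::prime_card mod_ring) \<Rightarrow> 'p mod_ring) set"
    and H :: "nat \<Rightarrow> ('n \<Rightarrow> 'p mod_ring) \<Rightarrow> 'p mod_ring"
  assumes lin: "linear_family F" and ai: "affine_invariant F"
    and f: "(\<lambda>x. \<Sum>l\<le>d. x i ^ l * H l x) \<in> F"
    and indep: "\<And>l x z. H l (x(i := z)) = H l x"
    and d: "d < CARD('p)" and k: "k \<le> d"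
  shows "(\<lambda>x. x i ^ k * H k x) \<in> F"
proof -
  have scaled: "(\<lambda>x. \<Sum>l\<le>d. (c * x i) ^ l * H l x) \<in> F" for c
    using affine_invariant_scale_coord[OF ai f, of i c] by (simp add: indep)
  show ?thesis
  proof (cases "k = 0")
    case True
    have "(\<Sum>l\<le>d. (0 * x i) ^ l * H l x) = H 0 x" for x
      by (simp add: power_0_left of_bool_def[symmetric])
    then show ?thesis using scaled[of 0] True by simp
  next
    case False
    \<comment> \<open>Averaging against t^a over all t kills every degree in x i except k.\<close>
    define a where "a = CARD('p) - 1 - k"
    have weight: "(\<Sum>t\<in>UNIV. (t::'p mod_ring) ^ (a + l)) = (if l = k then -1 else 0)"
      if "l \<le> d" for l
    proof -
      have "a + l < 2 * (CARD('p) - 1)"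
        using False nontriv[where 'a='p] d that unfolding a_def by linarith
      then have "0 < a + l \<and> (CARD('p) - 1) dvd (a + l) \<longleftrightarrow> a + l = CARD('p) - 1"
        using dvd_between_imp_eq[of "CARD('p) - 1" "a + l"] nontriv[where 'a='p] by auto
      also have "\<dots> \<longleftrightarrow> l = k"
        using d k unfolding a_def by linarith
      finally show ?thesis by (simp add: power_sum_mod_ring)
    qed
    have "(\<lambda>x. \<Sum>t\<in>UNIV. t ^ a * (\<Sum>l\<le>d. (t * x i) ^ l * H l x)) \<in> F"
      by (intro linear_family_sum[OF lin] linear_family_scale[OF lin] scaled) simp
    moreover have "(\<Sum>t\<in>UNIV. t ^ a * (\<Sum>l\<le>d. (t * x i) ^ l * H l x)) = - (x i ^ k * H k x)"
      for x
    proof -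
      have "(\<Sum>t\<in>UNIV. t ^ a * (\<Sum>l\<le>d. (t * x i) ^ l * H l x))
          = (\<Sum>t\<in>UNIV. \<Sum>l\<le>d. t ^ (a + l) * (x i ^ l * H l x))"
        by (simp add: sum_distrib_left power_mult_distrib power_add mult.assoc)
      also have "\<dots> = (\<Sum>l\<le>d. (\<Sum>t\<in>UNIV. t ^ (a + l)) * (x i ^ l * H l x))"
        by (subst sum.swap) (simp add: sum_distrib_right)
      also have "\<dots> = (\<Sum>l\<le>d. if l = k then - (x i ^ l * H l x) else 0)"
        by (rule sum.cong[OF refl]) (simp add: weight)
      also have "\<dots> = - (x i ^ k * H k x)"
        using k by simp
      finally show ?thesis .
    qed
    ultimately have "(\<lambda>x. - (x i ^ k * H k x)) \<in> F" by simp
    from linear_family_scale[OF lin this, of "-1"] show ?thesis by simp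
  qed
qed

lemma monomial_fun_split:
  "monomial_fun e x = x i ^ e i * monomial_fun (e(i := 0)) x"
proof -
  have "monomial_fun (e(i := 0)) x = (\<Prod>k\<in>UNIV - {i}. x k ^ e k)"
    unfolding monomial_fun_def by (simp add: prod.remove[of UNIV i])
  then show ?thesis
    unfolding monomial_fun_def by (simp add: prod.remove[of UNIV i])
qed

lemma monomial_fun_fun_upd_zero:
  "monomial_fun (e(i := 0)) (x(i := z)) = monomial_fun (e(i := 0)) x"
  unfolding monomial_fun_def by (rule prod.cong) auto

lemma binomial_nonzero_mod_ring:
  assumes "n < CARD('p)" "k \<le> n"
  shows "(of_nat (n choose k) :: 'p::prime_card mod_ring) \<noteq> 0"
proof
  assume "(of_nat (n choose k) :: 'p mod_ring) = 0"
  then have "CARD('p) dvd (n choose k)" by (rule of_nat_0_mod_ring_dvd)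
  then have "CARD('p) dvd fact n"
    using binomial_fact_lemma[OF assms(2)] by (metis dvd_mult)
  then show False
    using assms(1) prime_dvd_fact_iff[OF prime_card[where 'a='p]] by simp
qed

lemma shifted_monomial_term_in_family:
  fixes F :: "(('n::finite \<Rightarrow> 'p::prime_card mod_ring) \<Rightarrow> 'p mod_ring) set"
  assumes lin: "linear_family F" and ai: "affine_invariant F"
    and shifted: "(\<lambda>x. monomial_fun e (x(i := x i + y x))) \<in> F"
    and indep: "\<And>x z. y (x(i := z)) = y x"
    and ei: "e i < CARD('p)" and l: "l \<le> e i"
  shows "(\<lambda>x. x i ^ l * (y x ^ (e i - l) * monomial_fun (e(i := 0)) x)) \<in> F"
proof -
  define H where
    "H k x = of_nat (e i choose k) * (y x ^ (e i - k) * monomial_fun (e(i := 0)) x)" for k x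
  have H_indep: "H k (x(i := z)) = H k x" for k x z
    unfolding H_def by (simp only: indep monomial_fun_fun_upd_zero)
  have "monomial_fun e (x(i := x i + y x)) = (\<Sum>k\<le>e i. x i ^ k * H k x)" for x
    by (simp add: monomial_fun_split[of e _ i] monomial_fun_fun_upd_zero binomial_ring
        H_def sum_distrib_left mult_ac)
  with shifted have "(\<lambda>x. \<Sum>k\<le>e i. x i ^ k * H k x) \<in> F"
    by simp
  then have "(\<lambda>x. x i ^ l * H l x) \<in> F"
    by (rule coefficient_in_family[OF lin ai _ H_indep ei l])
  from linear_family_scale[OF lin this, of "inverse (of_nat (e i choose l))"] show ?thesis
    using binomial_nonzero_mod_ring[OF ei l] by (simp add: H_def field_simps)
qed

lemma monomial_fun_lower_in_family:
  fixes F :: "(('n::finite \<Rightarrow> 'p::prime_card mod_ring) \<Rightarrow> 'p mod_ring) set"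
  assumes lin: "linear_family F" and ai: "affine_invariant F"
    and e: "monomial_fun e \<in> F" and ei: "e i < CARD('p)" and l: "l \<le> e i"
  shows "monomial_fun (e(i := l)) \<in> F"
proof -
  have "monomial_fun (e(i := l)) = (\<lambda>x. x i ^ l * (1 ^ (e i - l) * monomial_fun (e(i := 0)) x))"
  proof
    show "monomial_fun (e(i := l)) x = x i ^ l * (1 ^ (e i - l) * monomial_fun (e(i := 0)) x)" for x
      using monomial_fun_split[of "e(i := l)" x i] by simp
  qed
  also have "\<dots> \<in> F"
    by (rule shifted_monomial_term_in_family[OF lin ai, of e i "\<lambda>_. 1"])
      (use affine_invariant_shift_coord[OF ai e, of i 1] ei l in simp_all)
  finally show ?thesis .
qed

lemma monomial_fun_move_in_family:
  fixes F :: "(('n::finite \<Rightarrow> 'p::prime_card mod_ring) \<Rightarrow> 'p mod_ring) set"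
  assumes lin: "linear_family F" and ai: "affine_invariant F"
    and e: "monomial_fun e \<in> F" and ei: "e i < CARD('p)" and l: "l \<le> e i" and ji: "j \<noteq> i"
  shows "monomial_fun (e(i := l, j := e j + (e i - l))) \<in> F"
proof -
  have "monomial_fun (e(i := l, j := e j + (e i - l))) =
      (\<lambda>x. x i ^ l * (x j ^ (e i - l) * monomial_fun (e(i := 0)) x))"
  proof
    fix x
    define M where "M = monomial_fun (e(i := 0, j := 0)) x"
    have "e(i := l, j := e j + (e i - l), i := 0) = e(i := 0, j := e j + (e i - l))"
      using ji by (auto simp: fun_eq_iff)
    then have "monomial_fun (e(i := l, j := e j + (e i - l))) x =
        x i ^ l * monomial_fun (e(i := 0, j := e j + (e i - l))) x"
      using monomial_fun_split[of "e(i := l, j := e j + (e i - l))" x i] ji by simp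
    moreover have "monomial_fun (e(i := 0, j := e j + (e i - l))) x = x j ^ (e j + (e i - l)) * M"
      using monomial_fun_split[of "e(i := 0, j := e j + (e i - l))" x j] by (simp add: M_def)
    moreover have "monomial_fun (e(i := 0)) x = x j ^ e j * M"
      using monomial_fun_split[of "e(i := 0)" x j] ji by (simp add: M_def)
    ultimately show "monomial_fun (e(i := l, j := e j + (e i - l))) x =
        x i ^ l * (x j ^ (e i - l) * monomial_fun (e(i := 0)) x)"
      by (simp add: power_add mult_ac)
  qed
  also have "\<dots> \<in> F"
    by (rule shifted_monomial_term_in_family[OF lin ai, of e i "\<lambda>x. x j"])
      (use affine_invariant_add_coord[OF ai e ji] ei l ji in simp_all)
  finally show ?thesis .
qed

lemma deg1_fun_upd: "deg1 (e(i := v)) + e i = deg1 e + v"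
proof -
  have "deg1 (e(i := v)) = v + (\<Sum>k\<in>UNIV - {i}. e k)"
    unfolding deg1_def by (simp add: sum.remove[of UNIV i])
  moreover have "deg1 e = e i + (\<Sum>k\<in>UNIV - {i}. e k)"
    unfolding deg1_def by (simp add: sum.remove[of UNIV i])
  ultimately show ?thesis by simp
qed

lemma deg1_le_reachable:
  fixes S :: "('n::finite \<Rightarrow> nat) set"
  assumes lower: "\<And>e i. e \<in> S \<Longrightarrow> 0 < e i \<Longrightarrow> e(i := e i - 1) \<in> S"
    and move: "\<And>e i j. e \<in> S \<Longrightarrow> 0 < e i \<Longrightarrow> j \<noteq> i \<Longrightarrow> e j + 1 < b \<Longrightarrow>
      e(i := e i - 1, j := e j + 1) \<in> S"
    and "e \<in> S" "deg1 e' \<le> deg1 e" "\<forall>i. e' i < b"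
  shows "e' \<in> S"
  using assms(3,4)
proof (induction "\<Sum>k\<in>UNIV. e k - e' k" arbitrary: e rule: less_induct)
  case (less e)
  show ?case
  proof (cases "\<forall>k. e k \<le> e' k")
    case True
    then have "deg1 e \<le> deg1 e'"
      unfolding deg1_def by (intro sum_mono) blast
    then have "deg1 e = deg1 e'"
      using less.prems(2) by (rule antisym)
    then have "e k = e' k" for k
      unfolding deg1_def
      by (rule sum_mono_inv[OF _ _ UNIV_I finite_class.finite_UNIV]) (use True in blast)
    then have "e = e'" by blast
    then show ?thesis using less.prems(1) by simp
  next
    case False
    then obtain i where i: "e' i < e i" by (auto simp: not_le)
    show ?thesis
    proof (cases "\<exists>j. e j < e' j")
      case True
      then obtain j where j: "e j < e' j" by blast
      have ji: "j \<noteq> i" using i j by auto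
      define e2 where "e2 = e(i := e i - 1, j := e j + 1)"
      have "e j + 1 < b" using j assms(5) by (metis Suc_eq_plus1 Suc_leI le_less_trans)
      then have "e2 \<in> S" unfolding e2_def using move[OF less.prems(1) _ ji] i by simp
      moreover have "deg1 e2 = deg1 e"
        using deg1_fun_upd[of e i "e i - 1"] deg1_fun_upd[of "e(i := e i - 1)" j "e j + 1"] i ji
        by (simp add: e2_def)
      moreover have "(\<Sum>k\<in>UNIV. e2 k - e' k) < (\<Sum>k\<in>UNIV. e k - e' k)"
        by (rule sum_strict_mono_ex1) (use i j ji in \<open>auto simp: e2_def\<close>)
      ultimately show ?thesis using less.hyps less.prems(2) by simp
    next
      case False
      define e2 where "e2 = e(i := e i - 1)"
      have "e2 \<in> S" unfolding e2_def using lower[OF less.prems(1)] i by simp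
      moreover have "deg1 e' \<le> deg1 e2"
        unfolding deg1_def by (rule sum_mono) (use False i in \<open>auto simp: e2_def not_less\<close>)
      moreover have "(\<Sum>k\<in>UNIV. e2 k - e' k) < (\<Sum>k\<in>UNIV. e k - e' k)"
        by (rule sum_strict_mono_ex1) (use i in \<open>auto simp: e2_def\<close>)
      ultimately show ?thesis using less.hyps by simp
    qed
  qed
qed

theorem lemma3p1:
  fixes F :: "(('n::finite \<Rightarrow> 'p::prime_card mod_ring) \<Rightarrow> 'p mod_ring) set"
    and e e' :: "'n \<Rightarrow> nat"
  assumes "linear_family F"
    and "affine_invariant F"
    and "\<forall>i. e i < CARD('p)"
    and "monomial_fun e \<in> F"
    and "\<forall>i. e' i < CARD('p)"
    and "deg1 e' \<le> deg1 e"
  shows "monomial_fun e' \<in> F"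
proof -
  let ?S = "{e. (\<forall>i. e i < CARD('p)) \<and> monomial_fun e \<in> F}"
  have "e' \<in> ?S"
  proof (rule deg1_le_reachable[where b = "CARD('p)"])
    fix e i
    assume e: "e \<in> ?S" and "0 < e i"
    have "monomial_fun (e(i := e i - 1)) \<in> F"
      by (rule monomial_fun_lower_in_family[OF assms(1,2)]) (use e in auto)
    with e show "e(i := e i - 1) \<in> ?S"
      by (simp add: less_imp_diff_less)
  next
    fix e i j
    assume e: "e \<in> ?S" and ei: "0 < e i" and ji: "j \<noteq> i" and ej: "e j + 1 < CARD('p)"
    have "monomial_fun (e(i := e i - 1, j := e j + (e i - (e i - 1)))) \<in> F"
      by (rule monomial_fun_move_in_family[OF assms(1,2)]) (use e ji in auto)
    with e ei ej show "e(i := e i - 1, j := e j + 1) \<in> ?S"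
      by (simp add: less_imp_diff_less)
  qed (use assms in simp_all)
  then show ?thesis by simp
qed

end
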